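(* Let $L$ be a finite lattice, $\varphi\in M_\infty(L)$, and let $(a_1,\dots,a_n)$ be a linear extension of $L$. Set $\varphi_0=\varphi$ and $\varphi_i=\Lambda_{a_i}\varphi_{i-1}$ for $i=1,\dots,n$. Let $\Psi_i\in M_\infty(\mathcal L)$ satisfy $\Pi(\Psi_i)=\lambda(\varphi_i;a_{i+1},\cdot)$ for $i=0,\dots,n-1$, let $\Psi_n\in M_\infty(\mathcal L)$ satisfy $\Pi(\Psi_n)=\varphi_n$, and put $\Phi=\sum_{i=0}^n\Psi_i$. Then $\Phi$ is the Möbius extension of $\varphi$.
   Context: $L$ is a finite lattice with meet $\wedge$ and join $\vee$. A linear extension of $L$ is an enumeration $(a_1,\dots,a_n)$ of all elements of $L$ such that $i<j$ whenever $a_i<a_j$. Completely monotone: all iterated differences $\nabla_a\varphi(x)=\varphi(x)-\varphi(x\wedge a)$ nonnegative. $M_\infty(L)$: nonnegative completely monotone functions on $L$. A path from $a$ to $b$ is a sequence $H=(h_0,\dots,h_m)$ of distinct elements with $h_0=a$, $h_m=b$; $\varphi(H)=\sum_{i=0}^m\varphi(h_i)-\sum_{i=1}^m\varphi(h_{i-1}\vee h_i)$; $\lambda(\varphi;a,b)=\max\{\varphi(H)\}$ over such paths; $\Lambda_a\varphi(x)=\varphi(x)-\lambda(\varphi;a,x)$. $\mathcal L$ is the set of nonempty up-sets of $L$ ordered by $U\preceq V$ iff $U\supseteq V$ (meet = union); $M_\infty(\mathcal L)$ is the set of nonnegative completely monotone functions on $(\mathcal L,\preceq)$; $\Pi(\Psi)(x)=\Psi(\langle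 x\rangle^* )$ with $\langle x\rangle^*=\{y:y\ge x\}$. For $\varphi\in M_\infty(L)$ with Möbius inverse $f$ ($\varphi(x)=\sum_{y\le x}f(y)$), its Möbius extension is $\Phi(U)=\sum_{V\preceq U}F(V)$ with $F(\langle x\rangle^* )=f(x)$ and $F=0$ on non-principal up-sets. *)

theory Defs
  imports Complex_Main
begin

definition nabla :: "('b \<Rightarrow> 'b \<Rightarrow> 'b) \<Rightarrow> 'b \<Rightarrow> ('b \<Rightarrow> real) \<Rightarrow> 'b \<Rightarrow> real" where
  "nabla meet a \<phi> x = \<phi> x - \<phi> (meet x a)"

fun nablas :: "('b \<Rightarrow> 'b \<Rightarrow> 'b) \<Rightarrow> 'b list \<Rightarrow> ('b \<Rightarrow> real) \<Rightarrow> 'b \<Rightarrow> real" where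
  "nablas meet [] \<phi> = \<phi>"
| "nablas meet (a # as) \<phi> = nabla meet a (nablas meet as \<phi>)"

definition M_inf_on :: "'b set \<Rightarrow> ('b \<Rightarrow> 'b \<Rightarrow> 'b) \<Rightarrow> ('b \<Rightarrow> real) \<Rightarrow> bool" where
  "M_inf_on C meet \<phi> \<longleftrightarrow>
     (\<forall>x\<in>C. 0 \<le> \<phi> x) \<and>
     (\<forall>as x. set as \<subseteq> C \<longrightarrow> x \<in> C \<longrightarrow> 0 \<le> nablas meet as \<phi> x)"

definition M_inf :: "('a::{finite,lattice} \<Rightarrow> real) \<Rightarrow> bool" where
  "M_inf \<phi> \<longleftrightarrow> M_inf_on UNIV inf \<phi>"

section \<open>Nonempty up-sets, ordered by reverse inclusion (meet = union)\<close>

definition upsets :: "('a::order) set set" where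
  "upsets = {U. U \<noteq> {} \<and> (\<forall>x\<in>U. \<forall>y. x \<le> y \<longrightarrow> y \<in> U)}"

definition principal_up :: "'a::order \<Rightarrow> 'a set" where
  "principal_up x = {y. x \<le> y}"

definition M_inf_upsets :: "('a::{finite,lattice} set \<Rightarrow> real) \<Rightarrow> bool" where
  "M_inf_upsets \<Psi> \<longleftrightarrow> M_inf_on upsets (\<union>) \<Psi>"

definition Pi_proj :: "('a::order set \<Rightarrow> real) \<Rightarrow> 'a \<Rightarrow> real" where
  "Pi_proj \<Psi> x = \<Psi> (principal_up x)"

definition paths :: "'a \<Rightarrow> 'a \<Rightarrow> 'a list set" where
  "paths a b = {H. H \<noteq> [] \<and> distinct H \<and> hd H = a \<and> last H = b}"

definition path_val :: "('a::lattice \<Rightarrow> real) \<Rightarrow> 'a list \<Rightarrow> real" where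
  "path_val \<phi> H = sum_list (map \<phi> H) - sum_list (map (\<lambda>(x, y). \<phi> (sup x y)) (zip H (tl H)))"

definition lam :: "('a::{finite,lattice} \<Rightarrow> real) \<Rightarrow> 'a \<Rightarrow> 'a \<Rightarrow> real" where
  "lam \<phi> a b = Max (path_val \<phi> ` paths a b)"

definition Lam :: "'a::{finite,lattice} \<Rightarrow> ('a \<Rightarrow> real) \<Rightarrow> 'a \<Rightarrow> real" where
  "Lam a \<phi> x = \<phi> x - lam \<phi> a x"

text \<open>phi_seq phi as i = phi_i, where phi_0 = phi and phi_i = Lambda_{a_i} phi_{i-1};
  the list as is 0-indexed, so a_i = as ! (i - 1).\<close>
definition phi_seq :: "('a::{finite,lattice} \<Rightarrow> real) \<Rightarrow> 'a list \<Rightarrow> nat \<Rightarrow> 'a \<Rightarrow> real" where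
  "phi_seq \<phi> as i = fold Lam (take i as) \<phi>"

definition linear_extension :: "'a::{finite,order} list \<Rightarrow> bool" where
  "linear_extension as \<longleftrightarrow> distinct as \<and> set as = UNIV \<and>
     (\<forall>i<length as. \<forall>j<length as. as ! i < as ! j \<longrightarrow> i < j)"

definition mobius_inv :: "('a::{finite,order} \<Rightarrow> real) \<Rightarrow> 'a \<Rightarrow> real" where
  "mobius_inv \<phi> = (THE f. \<forall>x. \<phi> x = (\<Sum>y\<in>{y. y \<le> x}. f y))"

definition mobius_F :: "('a::{finite,order} \<Rightarrow> real) \<Rightarrow> 'a set \<Rightarrow> real" where
  "mobius_F \<phi> V = (if \<exists>x. V = principal_up x
                     then mobius_inv \<phi> (THE x. V = principal_up x) else 0)"

text \<open>Phi(U) = sum over V in the up-set lattice with V \<preceq> U (i.e. V \<supseteq> U) of F(V).\<close>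
definition mobius_ext :: "('a::{finite,order} \<Rightarrow> real) \<Rightarrow> 'a set \<Rightarrow> real" where
  "mobius_ext \<phi> U = (\<Sum>V\<in>{V\<in>upsets. U \<subseteq> V}. mobius_F \<phi> V)"

end

theory Submission
  imports Defs
begin

text \<open>By Moebius inversion \<open>\<phi>\<close> is the zeta transform of its Moebius inverse \<open>f\<close>, and
  complete monotonicity makes \<open>f\<close> nonnegative. Inductively, \<open>\<phi>\<^sub>i\<close> is the zeta transform of \<open>f\<close>
  with the masses at \<open>a\<^sub>1, \<dots>, a\<^sub>i\<close> removed, so along a linear extension the remaining mass
  vanishes strictly below \<open>a = a\<^bsub>i+1\<^esub>\<close>. The value of a path never exceeds the remaining mass
  below all of its points, and the path \<open>a, a \<sqinter> x, x\<close> attains this bound, hence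
  \<open>\<lambda>(\<phi>\<^sub>i; a, x)\<close> is \<open>f(a)\<close> for \<open>a \<le> x\<close> and \<open>0\<close> otherwise. A completely monotone function on
  up-sets is antitone with respect to inclusion of principal up-sets, which forces
  \<open>\<Psi>\<^sub>i(U)\<close> to be \<open>f(a)\<close> if \<open>U\<close> lies in the up-set of \<open>a\<close> and \<open>0\<close> otherwise, while \<open>\<Psi>\<^sub>n = 0\<close>.
  Summing over \<open>i\<close> gives the sum of \<open>f(x)\<close> over all \<open>x\<close> whose up-set contains \<open>U\<close>, which is
  the Moebius extension.\<close>

definition zeta_transform :: "('a::order \<Rightarrow> 'b::comm_monoid_add) \<Rightarrow> 'a \<Rightarrow> 'b" where
  "zeta_transform f x = (\<Sum>y | y \<le> x. f y)"

lemma zeta_transform_split: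
  fixes f :: "'a::{finite,order} \<Rightarrow> 'b::comm_monoid_add"
  shows "zeta_transform f x = f x + (\<Sum>y | y < x. f y)"
proof -
  have "{y. y \<le> x} = insert x {y. y < x}"
    by auto
  then show ?thesis
    by (simp add: zeta_transform_def)
qed

lemma ex_zeta_transform_eq_on:
  fixes \<phi> :: "'a::{finite,order} \<Rightarrow> 'b::ab_group_add"
  shows "\<exists>f. \<forall>x\<in>A. zeta_transform f x = \<phi> x"
  using finite[of A]
proof (induction rule: finite_remove_induct)
  case empty
  then show ?case by simp
next
  case (remove A)
  obtain m where m: "m \<in> A" "\<forall>b\<in>A. m \<le> b \<longrightarrow> m = b"
    using finite_has_maximal[OF remove.hyps(1,2)] by blast
  obtain f where f: "\<forall>x\<in>A - {m}. zeta_transform f x = \<phi> x"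
    using remove.IH[OF m(1)] by blast
  define f' where "f' = f(m := \<phi> m - (\<Sum>y | y < m. f y))"
  have "zeta_transform f' x = \<phi> x" if x: "x \<in> A" for x
  proof (cases "x = m")
    case True
    have "(\<Sum>y | y < m. f' y) = (\<Sum>y | y < m. f y)"
      by (rule sum.cong) (auto simp: f'_def)
    then show ?thesis
      using True by (simp add: zeta_transform_split f'_def)
  next
    case False
    \<comment> \<open>\<open>m\<close> is maximal in \<open>A\<close>, so it does not lie below \<open>x\<close> and the change at \<open>m\<close> is invisible\<close>
    have "zeta_transform f' x = zeta_transform f x"
      unfolding zeta_transform_def by (rule sum.cong) (use m x False in \<open>auto simp: f'_def\<close>)
    then show ?thesis
      using f x False by simp
  qed
  then show ?case by blast
qed

lemma zeta_transform_inj: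
  fixes f g :: "'a::{finite,order} \<Rightarrow> 'b::cancel_comm_monoid_add"
  assumes "zeta_transform f = zeta_transform g"
  shows "f = g"
proof (rule ccontr)
  assume "f \<noteq> g"
  then obtain m where m: "f m \<noteq> g m" "\<forall>b. f b \<noteq> g b \<longrightarrow> b \<le> m \<longrightarrow> m = b"
    using finite_has_minimal[of "{x. f x \<noteq> g x}"] by fastforce
  have "(\<Sum>y | y < m. f y) = (\<Sum>y | y < m. g y)"
    by (rule sum.cong) (use m(2) in auto)
  then have "f m = g m"
    using fun_cong[OF assms, of m] by (simp add: zeta_transform_split)
  with m(1) show False ..
qed

lemma zeta_transform_mobius_inv:
  fixes \<phi> :: "'a::{finite,order} \<Rightarrow> real"
  shows "zeta_transform (mobius_inv \<phi>) = \<phi>"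
proof -
  obtain f where f: "zeta_transform f = \<phi>"
    using ex_zeta_transform_eq_on[of UNIV \<phi>] by auto
  have "\<exists>!f. \<forall>x. \<phi> x = (\<Sum>y | y \<le> x. f y)"
  proof (rule ex1I)
    show "\<forall>x. \<phi> x = (\<Sum>y | y \<le> x. f y)"
      unfolding f[symmetric] zeta_transform_def by simp
  next
    fix g assume "\<forall>x. \<phi> x = (\<Sum>y | y \<le> x. g y)"
    then have "zeta_transform g = zeta_transform f"
      unfolding f by (simp add: zeta_transform_def fun_eq_iff)
    then show "g = f"
      by (rule zeta_transform_inj)
  qed
  then have "\<forall>x. \<phi> x = (\<Sum>y | y \<le> x. mobius_inv \<phi> y)"
    unfolding mobius_inv_def by (rule theI')
  then show ?thesis
    by (simp add: zeta_transform_def fun_eq_iff)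
qed

lemma nablas_zeta_transform:
  fixes f :: "'a::{finite,lattice} \<Rightarrow> real"
  shows "nablas inf as (zeta_transform f) x = (\<Sum>y | y \<le> x \<and> (\<forall>a\<in>set as. \<not> y \<le> a). f y)"
proof (induction as arbitrary: x)
  case Nil
  then show ?case by (simp add: zeta_transform_def)
next
  case (Cons a as)
  let ?S = "{y. y \<le> x \<and> (\<forall>a\<in>set as. \<not> y \<le> a)}"
  have "{y. y \<le> inf x a \<and> (\<forall>a\<in>set as. \<not> y \<le> a)} = ?S \<inter> {y. y \<le> a}"
    by auto
  moreover have "sum f ?S = sum f (?S \<inter> {y. y \<le> a}) + sum f (?S - {y. y \<le> a})"
    by (rule sum.Int_Diff) simp
  moreover have "?S - {y. y \<le> a} = {y. y \<le> x \<and> (\<forall>a\<in>set (a # as). \<not> y \<le> a)}"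
    by auto
  ultimately show ?case
    by (simp add: nabla_def Cons.IH)
qed

lemma mobius_inv_nonneg:
  fixes \<phi> :: "'a::{finite,lattice} \<Rightarrow> real"
  assumes "M_inf \<phi>"
  shows "0 \<le> mobius_inv \<phi> z"
proof -
  \<comment> \<open>differencing along every element not above \<open>z\<close> isolates the Moebius mass at \<open>z\<close>\<close>
  obtain as where as: "set as = {a. \<not> z \<le> a}"
    using finite_list[of "{a. \<not> z \<le> a}"] by auto
  have "{y. y \<le> z \<and> (\<forall>a\<in>set as. \<not> y \<le> a)} = {z}"
    using as by (auto intro: order.antisym)
  then have "nablas inf as \<phi> z = mobius_inv \<phi> z"
    using nablas_zeta_transform[of as "mobius_inv \<phi>" z] by (simp add: zeta_transform_mobius_inv)
  moreover have "0 \<le> nablas inf as \<phi> z"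
    using assms by (simp add: M_inf_def M_inf_on_def)
  ultimately show ?thesis by simp
qed

lemma finite_paths: "finite (paths (a::'a::finite) b)"
proof (rule finite_subset)
  show "paths a b \<subseteq> {xs. set xs \<subseteq> UNIV \<and> length xs \<le> card (UNIV::'a set)}"
    by (auto simp: paths_def card_mono simp flip: distinct_card)
  show "finite {xs. set xs \<subseteq> (UNIV::'a set) \<and> length xs \<le> card (UNIV::'a set)}"
    by (rule finite_lists_length_le) simp
qed

lemma path_val_singleton [simp]: "path_val \<psi> [h] = \<psi> h"
  by (simp add: path_val_def)

lemma path_val_Cons_Cons [simp]:
  "path_val \<psi> (h # h' # r) = \<psi> h + path_val \<psi> (h' # r) - \<psi> (sup h h')"
  by (simp add: path_val_def)

lemma path_val_zeta_transform_le:
  fixes g :: "'a::{finite,lattice} \<Rightarrow> real"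
  assumes g: "\<forall>y. 0 \<le> g y" and "H \<noteq> []"
  shows "path_val (zeta_transform g) H \<le> (\<Sum>y | \<forall>h\<in>set H. y \<le> h. g y)"
  using \<open>H \<noteq> []\<close>
proof (induction H rule: induct_list012)
  case (3 h h' r)
  \<comment> \<open>the mass removed by \<open>\<psi>(h) - \<psi>(h \<squnion> h')\<close> covers the mass below the tail but not below \<open>h\<close>\<close>
  let ?A = "{y. \<forall>t\<in>set (h' # r). y \<le> t}"
  let ?B = "{y. y \<le> h}"
  let ?C = "{y. y \<le> sup h h'}"
  have "sum g ?C = sum g (?C - ?B) + sum g ?B"
    by (rule sum.subset_diff) (auto intro: le_supI1)
  moreover have "sum g ?A = sum g (?A \<inter> ?B) + sum g (?A - ?B)"
    by (rule sum.Int_Diff) simp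
  moreover have "sum g (?A - ?B) \<le> sum g (?C - ?B)"
    by (rule sum_mono2) (use g in \<open>auto intro: le_supI2\<close>)
  moreover have "?A \<inter> ?B = {y. \<forall>t\<in>set (h # h' # r). y \<le> t}"
    by auto
  ultimately show ?case
    using "3.IH"(2) by (simp add: zeta_transform_def)
qed (simp_all add: zeta_transform_def)

lemma lam_zeta_transform_point_mass:
  fixes g :: "'a::{finite,lattice} \<Rightarrow> real"
  assumes g: "\<forall>y. 0 \<le> g y" and below: "\<forall>y. y < a \<longrightarrow> g y = 0"
  shows "lam (zeta_transform g) a x = (if a \<le> x then g a else 0)"
proof -
  let ?\<psi> = "zeta_transform g"
  let ?t = "if a \<le> x then g a else 0"
  have common: "(\<Sum>y | y \<le> a \<and> y \<le> z. g y) = (if a \<le> z then g a else 0)" for z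
  proof -
    have "(\<Sum>y | y \<le> a \<and> y \<le> z. g y) = (\<Sum>y | y \<le> a \<and> y \<le> z. if y = a then g a else 0)"
      by (rule sum.cong) (use below in \<open>auto simp: order.order_iff_strict\<close>)
    then show ?thesis
      by simp
  qed
  have \<psi>_a: "?\<psi> a = g a"
    using common[of a] by (simp add: zeta_transform_def)
  have \<psi>_below: "?\<psi> z = 0" if "z < a" for z
    unfolding zeta_transform_def by (rule sum.neutral) (use below that in \<open>auto intro: le_less_trans\<close>)
  have upper: "path_val ?\<psi> H \<le> ?t" if "H \<in> paths a x" for H
  proof -
    from that have H: "H \<noteq> []" "a \<in> set H" "x \<in> set H"
      by (auto simp: paths_def)
    have "path_val ?\<psi> H \<le> (\<Sum>y | \<forall>h\<in>set H. y \<le> h. g y)"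
      by (rule path_val_zeta_transform_le[OF g H(1)])
    also have "\<dots> \<le> (\<Sum>y | y \<le> a \<and> y \<le> x. g y)"
      by (rule sum_mono2) (use H g in auto)
    finally show ?thesis
      using common[of x] by simp
  qed
  have "\<exists>H\<in>paths a x. path_val ?\<psi> H = ?t"
  proof (cases "x = a")
    case True
    then show ?thesis
      using \<psi>_a by (intro bexI[of _ "[a]"]) (auto simp: paths_def)
  next
    case xa: False
    show ?thesis
    proof (cases "a \<le> x \<or> x \<le> a")
      case True
      then have "path_val ?\<psi> [a, x] = ?t"
        using xa \<psi>_a \<psi>_below[of x] by (auto simp: sup_absorb1 sup_absorb2 order.order_iff_strict)
      then show ?thesis
        using xa by (intro bexI[of _ "[a, x]"]) (auto simp: paths_def)
    next
      case False
      then have "inf a x < a" "inf a x \<noteq> x"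
        by (metis inf.cobounded1 inf.cobounded2 inf.absorb_iff2 inf_commute order.not_eq_order_implies_strict)+
      moreover have "path_val ?\<psi> [a, inf a x, x] = ?\<psi> (inf a x)"
        by (simp add: sup_absorb1 sup_absorb2)
      ultimately show ?thesis
        using False xa \<psi>_below by (intro bexI[of _ "[a, inf a x, x]"]) (auto simp: paths_def)
    qed
  qed
  then have "?t \<in> path_val ?\<psi> ` paths a x"
    by (metis image_eqI)
  then show ?thesis
    unfolding lam_def by (intro Max_eqI) (use finite_paths upper in auto)
qed

lemma phi_seq_Suc:
  "k < length as \<Longrightarrow> phi_seq \<phi> as (Suc k) = Lam (as ! k) (phi_seq \<phi> as k)"
  by (simp add: phi_seq_def take_Suc_conv_app_nth)

lemma distinct_nth_notin_set_take:
  "distinct xs \<Longrightarrow> k < length xs \<Longrightarrow> xs ! k \<notin> set (take k xs)"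
  by (auto simp: in_set_conv_nth nth_eq_iff_index_eq)

lemma linear_extension_less_in_set_take:
  assumes ext: "linear_extension as" and k: "k < length as" and y: "y < as ! k"
  shows "y \<in> set (take k as)"
proof -
  obtain j where j: "j < length as" "as ! j = y"
    using ext by (metis UNIV_I in_set_conv_nth linear_extension_def)
  then have "j < k"
    using ext k y by (auto simp: linear_extension_def)
  then show ?thesis
    using j k by (auto simp: in_set_conv_nth)
qed

lemma lam_zeta_transform_unvisited:
  fixes f :: "'a::{finite,lattice} \<Rightarrow> real"
  assumes ext: "linear_extension as" and k: "k < length as" and f: "\<forall>y. 0 \<le> f y"
  shows "lam (zeta_transform (\<lambda>y. if y \<in> set (take k as) then 0 else f y)) (as ! k) x
       = (if as ! k \<le> x then f (as ! k) else 0)"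
  using f linear_extension_less_in_set_take[OF ext k]
    distinct_nth_notin_set_take[of as k] ext k
  by (subst lam_zeta_transform_point_mass) (auto simp: linear_extension_def)

lemma phi_seq_eq_zeta_transform:
  fixes \<phi> :: "'a::{finite,lattice} \<Rightarrow> real"
  assumes M: "M_inf \<phi>" and ext: "linear_extension as"
  shows "k \<le> length as \<Longrightarrow>
    phi_seq \<phi> as k = zeta_transform (\<lambda>y. if y \<in> set (take k as) then 0 else mobius_inv \<phi> y)"
proof (induction k)
  case 0
  then show ?case
    by (simp add: phi_seq_def zeta_transform_mobius_inv)
next
  case (Suc k)
  let ?f = "mobius_inv \<phi>"
  let ?a = "as ! k"
  let ?g = "\<lambda>k y. if y \<in> set (take k as) then 0 else ?f y"
  have k: "k < length as"
    using Suc.prems by simp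
  have "?a \<notin> set (take k as)"
    using ext k by (simp add: linear_extension_def distinct_nth_notin_set_take)
  then have split: "?g k y = ?g (Suc k) y + (if y = ?a then ?f ?a else 0)" for y
    using k by (simp add: take_Suc_conv_app_nth)
  have "phi_seq \<phi> as (Suc k) x = zeta_transform (?g (Suc k)) x" for x
  proof -
    have "phi_seq \<phi> as (Suc k) x = zeta_transform (?g k) x - (if ?a \<le> x then ?f ?a else 0)"
      using Suc k lam_zeta_transform_unvisited[OF ext k] mobius_inv_nonneg[OF M]
      by (simp add: phi_seq_Suc Lam_def)
    also have "zeta_transform (?g k) x = zeta_transform (?g (Suc k)) x + (if ?a \<le> x then ?f ?a else 0)"
      unfolding zeta_transform_def split by (simp add: sum.distrib)
    finally show ?thesis
      by simp
  qed
  then show ?case ..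
qed

lemma lam_phi_seq:
  fixes \<phi> :: "'a::{finite,lattice} \<Rightarrow> real"
  assumes "M_inf \<phi>" and "linear_extension as" and "k < length as"
  shows "lam (phi_seq \<phi> as k) (as ! k) x = (if as ! k \<le> x then mobius_inv \<phi> (as ! k) else 0)"
  using assms mobius_inv_nonneg[OF assms(1)]
  by (simp add: phi_seq_eq_zeta_transform lam_zeta_transform_unvisited)

lemma phi_seq_length:
  fixes \<phi> :: "'a::{finite,lattice} \<Rightarrow> real"
  assumes "M_inf \<phi>" and "linear_extension as"
  shows "phi_seq \<phi> as (length as) = (\<lambda>_. 0)"
  using phi_seq_eq_zeta_transform[OF assms, of "length as"] assms(2)
  by (simp add: linear_extension_def zeta_transform_def fun_eq_iff)

lemma principal_up_in_upsets: "principal_up x \<in> upsets"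
  unfolding upsets_def principal_up_def by (auto intro: order.trans)

lemma principal_up_inj: "inj principal_up"
  by (rule injI) (auto simp: principal_up_def set_eq_iff intro: order.antisym)

lemma M_inf_on_nonneg: "M_inf_on C meet \<Psi> \<Longrightarrow> x \<in> C \<Longrightarrow> 0 \<le> \<Psi> x"
  by (simp add: M_inf_on_def)

lemma M_inf_on_antitone:
  assumes "M_inf_on C meet \<Psi>" and "x \<in> C" and "a \<in> C"
  shows "\<Psi> (meet x a) \<le> \<Psi> x"
proof -
  have "0 \<le> nablas meet [a] \<Psi> x"
    using assms unfolding M_inf_on_def by (metis empty_set empty_subsetI insert_subset list.simps(15))
  then show ?thesis
    by (simp add: nabla_def)
qed

lemma M_inf_upsets_le_principal:
  assumes "M_inf_upsets \<Psi>" and "U \<in> upsets" and "u \<in> U"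
  shows "\<Psi> U \<le> \<Psi> (principal_up u)"
proof -
  have "principal_up u \<union> U = U"
    using assms(2,3) by (auto simp: upsets_def principal_up_def)
  then show ?thesis
    using M_inf_on_antitone[of upsets "(\<union>)" \<Psi> "principal_up u" U] assms
    by (simp add: M_inf_upsets_def principal_up_in_upsets)
qed

lemma M_inf_upsets_point_mass:
  assumes M: "M_inf_upsets \<Psi>"
    and principal: "\<And>x. \<Psi> (principal_up x) = (if a \<le> x then c else 0)"
    and U: "U \<in> upsets"
  shows "\<Psi> U = (if U \<subseteq> principal_up a then c else 0)"
proof (cases "U \<subseteq> principal_up a")
  case True
  obtain u where u: "u \<in> U"
    using U by (auto simp: upsets_def)
  have "\<Psi> (U \<union> principal_up a) \<le> \<Psi> U"
    using M U by (intro M_inf_on_antitone) (auto simp: M_inf_upsets_def principal_up_in_upsets)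
  moreover have "U \<union> principal_up a = principal_up a" "a \<le> u"
    using True u by (auto simp: principal_up_def)
  ultimately show ?thesis
    using M_inf_upsets_le_principal[OF M U u] True principal by simp
next
  case False
  then obtain u where u: "u \<in> U" "\<not> a \<le> u"
    by (auto simp: principal_up_def)
  have "\<Psi> U \<le> 0"
    using M_inf_upsets_le_principal[OF M U u(1)] principal[of u] u(2) by simp
  moreover have "0 \<le> \<Psi> U"
    using M U by (simp add: M_inf_upsets_def M_inf_on_nonneg)
  ultimately show ?thesis
    using False by simp
qed

lemma M_inf_upsets_eq_0:
  assumes "M_inf_upsets \<Psi>" and "Pi_proj \<Psi> = (\<lambda>_. 0)" and "U \<in> upsets"
  shows "\<Psi> U = 0"
proof -
  have "\<Psi> U = (if U \<subseteq> principal_up a then 0 else 0)" for a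
    using assms by (intro M_inf_upsets_point_mass) (auto simp: Pi_proj_def fun_eq_iff)
  then show ?thesis
    by simp
qed

lemma mobius_ext_eq_sum_principal:
  fixes \<phi> :: "'a::{finite,lattice} \<Rightarrow> real"
  shows "mobius_ext \<phi> U = (\<Sum>x\<in>UNIV. if U \<subseteq> principal_up x then mobius_inv \<phi> x else 0)"
proof -
  have F: "mobius_F \<phi> (principal_up x) = mobius_inv \<phi> x" for x
  proof -
    have "(THE y. principal_up x = principal_up y) = x"
      using principal_up_inj by (intro the_equality) (auto dest: injD)
    then show ?thesis
      by (auto simp: mobius_F_def)
  qed
  have "mobius_ext \<phi> U = (\<Sum>V\<in>{V\<in>upsets. U \<subseteq> V} \<inter> range principal_up. mobius_F \<phi> V)"
    unfolding mobius_ext_def by (rule sum.mono_neutral_right) (auto simp: mobius_F_def)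
  also have "{V\<in>upsets. U \<subseteq> V} \<inter> range principal_up = principal_up ` {x. U \<subseteq> principal_up x}"
    using principal_up_in_upsets by blast
  also have "(\<Sum>V\<in>principal_up ` {x. U \<subseteq> principal_up x}. mobius_F \<phi> V)
      = (\<Sum>x | U \<subseteq> principal_up x. mobius_inv \<phi> x)"
    by (subst sum.reindex) (auto intro: inj_on_subset[OF principal_up_inj] simp: F)
  finally show ?thesis
    by (simp add: sum.If_cases)
qed

theorem corollary3p17:
  fixes \<phi> :: "'a::{finite,lattice} \<Rightarrow> real"
    and as :: "'a list"
    and \<Psi> :: "nat \<Rightarrow> 'a set \<Rightarrow> real"
  assumes "M_inf \<phi>"
    and "linear_extension as"
    and "\<And>i. i \<le> length as \<Longrightarrow> M_inf_upsets (\<Psi> i)"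
    and "\<And>i. i < length as \<Longrightarrow> Pi_proj (\<Psi> i) = lam (phi_seq \<phi> as i) (as ! i)"
    and "Pi_proj (\<Psi> (length as)) = phi_seq \<phi> as (length as)"
  shows "\<forall>U\<in>upsets. (\<Sum>i\<le>length as. \<Psi> i U) = mobius_ext \<phi> U"
proof
  fix U :: "'a set" assume U: "U \<in> upsets"
  let ?n = "length as"
  let ?h = "\<lambda>x. if U \<subseteq> principal_up x then mobius_inv \<phi> x else 0"
  have ext: "distinct as" "set as = UNIV"
    using assms(2) by (auto simp: linear_extension_def)
  have Psi_i: "\<Psi> i U = ?h (as ! i)" if i: "i < ?n" for i
  proof (rule M_inf_upsets_point_mass[OF assms(3) _ U])
    show "\<Psi> i (principal_up x) = (if as ! i \<le> x then mobius_inv \<phi> (as ! i) else 0)" for x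
      using assms(4)[OF i] lam_phi_seq[OF assms(1,2) i] by (simp add: Pi_proj_def fun_eq_iff)
  qed (use i in simp)
  have Psi_n: "\<Psi> ?n U = 0"
    using M_inf_upsets_eq_0[OF assms(3)[of ?n] _ U] assms(5) phi_seq_length[OF assms(1,2)] by simp
  have "(\<Sum>i\<le>?n. \<Psi> i U) = (\<Sum>i<?n. ?h (as ! i))"
    using Psi_i Psi_n by (simp add: lessThan_Suc_atMost[symmetric])
  also have "\<dots> = (\<Sum>x\<in>set as. ?h x)"
    using sum.distinct_set_conv_list[OF ext(1), of ?h] by (simp add: sum_list_sum_nth atLeast0LessThan)
  also have "\<dots> = mobius_ext \<phi> U"
    unfolding ext(2) by (simp add: mobius_ext_eq_sum_principal)
  finally show "(\<Sum>i\<le>?n. \<Psi> i U) = mobius_ext \<phi> U" .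
qed

end
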